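(* Let $X$ be a real Hilbert space, let $\alpha\in\mathbb{R}\setminus\{0\}$ and $\beta>0$, equip $X\times X\times\mathbb{R}$ with the norm $\|(x,y,\gamma)\|=\sqrt{\|x\|^2+\|y\|^2+\beta^2|\gamma|^2}$, and let $$C_\alpha=\{(x,y,\gamma)\in X\times X\times\mathbb{R} : \langle x,y\rangle=\alpha\gamma\}.$$ Let $(x_0,y_0,\gamma_0)\in X\times X\times\mathbb{R}$. Then: (i) If $x_0\neq y_0$ and $x_0\neq -y_0$, then $$P_{C_\alpha}(x_0,y_0,\gamma_0)=\Big\{\Big(\frac{x_0-\lambda y_0}{1-\lambda^2},\frac{y_0-\lambda x_0}{1-\lambda^2},\gamma_0+\frac{\lambda\alpha}{\beta^2}\Big)\Big\}$$ for the unique $\lambda\in]-1,1[$ solving $g(\lambda):=\frac{(\lambda^2+1)p-2\lambda q}{(1-\lambda^2)^2}-\frac{2\lambda\alpha^2}{\beta^2}-2\alpha\gamma_0=0$, where $p:=2\langle x_0,y_0\rangle$ and $q:=\|x_0\|^2+\|y_0\|^2$. (ii) If $y_0=-x_0\neq 0$: (a) when $\alpha(\gamma_0-\frac{\alpha}{\beta^2})<-\frac{\|x_0\|^2}{4}$, then $P_{C_\alpha}(x_0,-x_0,\gamma_0)=\{(\frac{x_0}{1-\lambda},\frac{-x_0}{1-\lambda},\gamma_0+\frac{\lambda\alpha}{\beta^2})\}$ for the unique $\lambda\in]-1,1[$ solving $g_1(\lambda):=\frac{2\|x_0\|^2}{(1-\lambda)^2}+\frac{2\lambda\alpha^2}{\beta^2}+2\alpha\gamma_0=0$;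 (b) when $\alpha(\gamma_0-\frac{\alpha}{\beta^2})\geq-\frac{\|x_0\|^2}{4}$, then $$P_{C_\alpha}(x_0,-x_0,\gamma_0)=\Big\{\Big(\frac{x_0}{2}+\frac{u}{\sqrt2},-\frac{x_0}{2}+\frac{u}{\sqrt2},\gamma_0-\frac{\alpha}{\beta^2}\Big): u\in X,\ \|u\|=\sqrt{2\alpha\big(\gamma_0-\tfrac{\alpha}{\beta^2}\big)+\tfrac{\|x_0\|^2}{2}}\Big\},$$ which is a singleton if and only if $\alpha(\gamma_0-\frac{\alpha}{\beta^2})=-\frac{\|x_0\|^2}{4}$. (iii) If $y_0=x_0\neq 0$: (a) when $\alpha(\gamma_0+\frac{\alpha}{\beta^2})>\frac{\|x_0\|^2}{4}$, then $P_{C_\alpha}(x_0,x_0,\gamma_0)=\{(\frac{x_0}{1+\lambda},\frac{x_0}{1+\lambda},\gamma_0+\frac{\lambda\alpha}{\beta^2})\}$ for the unique $\lambda\in]-1,1[$ solving $g_2(\lambda):=\frac{2\|x_0\|^2}{(1+\lambda)^2}-\frac{2\lambda\alpha^2}{\beta^2}-2\alpha\gamma_0=0$; (b) when $\alpha(\gamma_0+\frac{\alpha}{\beta^2})\leq\frac{\|x_0\|^2}{4}$, then $$P_{C_\alpha}(x_0,x_0,\gamma_0)=\Big\{\Big(\frac{x_0}{2}-\frac{v}{\sqrt2},\frac{x_0}{2}+\frac{v}{\sqrt2},\gamma_0+\frac{\alpha}{\beta^2}\Big): v\in X,\ \|v\|=\sqrt{-2\alpha\big(\gamma_0+\tfrac{\alpha}{\beta^2}\big)+\tfrac{\|x_0\|^2}{2}}\Big\},$$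 which is a singleton if and only if $\alpha(\gamma_0+\frac{\alpha}{\beta^2})=\frac{\|x_0\|^2}{4}$. (iv) If $x_0=y_0=0$: (a) when $\alpha\gamma_0>\frac{\alpha^2}{\beta^2}$, $P_{C_\alpha}(0,0,\gamma_0)$ is the non-singleton set $\{(\frac{u}{\sqrt2},\frac{u}{\sqrt2},\gamma_0-\frac{\alpha}{\beta^2}): u\in X,\ \|u\|=\sqrt{2\alpha(\gamma_0-\frac{\alpha}{\beta^2})}\}$; (b) when $|\alpha\gamma_0|\leq\frac{\alpha^2}{\beta^2}$, $P_{C_\alpha}(0,0,\gamma_0)=\{(0,0,0)\}$; (c) when $\alpha\gamma_0<-\frac{\alpha^2}{\beta^2}$, $P_{C_\alpha}(0,0,\gamma_0)$ is the non-singleton set $\{(-\frac{v}{\sqrt2},\frac{v}{\sqrt2},\gamma_0+\frac{\alpha}{\beta^2}): v\in X,\ \|v\|=\sqrt{-2\alpha(\gamma_0+\frac{\alpha}{\beta^2})}\}$.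
   Context: For a nonempty set $S\subseteq X\times X\times\mathbb{R}$, the projection $P_S(z)$ is the set $\operatorname{argmin}_{w\in S}\|w-z\|$, where the norm is the $\beta$-weighted norm $\|(x,y,\gamma)\|=\sqrt{\|x\|^2+\|y\|^2+\beta^2|\gamma|^2}$. *)

theory Defs
  imports "HOL-Analysis.Analysis"
begin

definition wnorm :: "real \<Rightarrow> ('a::real_inner \<times> 'a \<times> real) \<Rightarrow> real" where
  "wnorm \<beta> w = (case w of (x, y, \<gamma>) \<Rightarrow> sqrt (norm x ^ 2 + norm y ^ 2 + \<beta>^2 * \<bar>\<gamma>\<bar>^2))"

definition proj :: "real \<Rightarrow> ('a::real_inner \<times> 'a \<times> real) set \<Rightarrow> ('a \<times> 'a \<times> real) \<Rightarrow> ('a \<times> 'a \<times> real) set" where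
  "proj \<beta> S z = {w \<in> S. \<forall>w' \<in> S. wnorm \<beta> (w - z) \<le> wnorm \<beta> (w' - z)}"

definition Calpha :: "real \<Rightarrow> ('a::real_inner \<times> 'a \<times> real) set" where
  "Calpha \<alpha> = {(x, y, \<gamma>). inner x y = \<alpha> * \<gamma>}"

definition gfun :: "real \<Rightarrow> real \<Rightarrow> 'a::real_inner \<Rightarrow> 'a \<Rightarrow> real \<Rightarrow> real \<Rightarrow> real" where
  "gfun \<alpha> \<beta> x0 y0 \<gamma>0 t =
     (let p = 2 * inner x0 y0; q = norm x0 ^ 2 + norm y0 ^ 2 in
      ((t^2 + 1) * p - 2 * t * q) / (1 - t^2)^2 - 2 * t * \<alpha>^2 / \<beta>^2 - 2 * \<alpha> * \<gamma>0)"

definition g1fun :: "real \<Rightarrow> real \<Rightarrow> 'a::real_inner \<Rightarrow> real \<Rightarrow> real \<Rightarrow> real" where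
  "g1fun \<alpha> \<beta> x0 \<gamma>0 t = 2 * norm x0 ^ 2 / (1 - t)^2 + 2 * t * \<alpha>^2 / \<beta>^2 + 2 * \<alpha> * \<gamma>0"

definition g2fun :: "real \<Rightarrow> real \<Rightarrow> 'a::real_inner \<Rightarrow> real \<Rightarrow> real \<Rightarrow> real" where
  "g2fun \<alpha> \<beta> x0 \<gamma>0 t = 2 * norm x0 ^ 2 / (1 + t)^2 - 2 * t * \<alpha>^2 / \<beta>^2 - 2 * \<alpha> * \<gamma>0"

end

theory Submission
  imports Defs
begin

(* Lagrange multipliers with an exact certificate.  Let w* = (xs, ys, gs) lie on C_alpha and
   z = (xs + t ys, ys + t xs, gs - t alpha / beta^2), i.e. z - w* is t times the gradient of
   <x, y> - alpha gamma at w* for the beta-weighted inner product.  Then for every w on C_alpha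
     |w - z|^2 = |w* - z|^2 + |x - xs|^2 + |y - ys|^2 + 2 t <x - xs, y - ys> + beta^2 (gamma - gs)^2,
   and by Cauchy-Schwarz the quadratic form on the right is nonnegative for |t| <= 1 and
   positive definite for |t| < 1.  So for |t| < 1 the point w* is the unique projection; solving
   for w* gives the formulas of (i), (ii)(a) and (iii)(a), and w* lies on C_alpha exactly when
   g(t) = 0.  Such roots exist by the intermediate value theorem, and the root is unique because
   the projection is: t is read off its gamma-coordinate gamma0 + t alpha / beta^2.
   For t = -1 and t = 1 the form is |(x - xs) + t (y - ys)|^2 + beta^2 (gamma - gs)^2, so the
   projection is the slice of C_alpha with gamma = gs and x + t y = x0, a sphere: cases (ii)(b),
   (iii)(b), (iv)(a) and (iv)(c).  In case (iv)(b) the origin itself is the certificate, with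
   multiplier t = - gamma0 beta^2 / alpha. *)

lemma wnorm_sq: "wnorm \<beta> (x, y, g) ^ 2 = norm x ^ 2 + norm y ^ 2 + \<beta>^2 * g^2"
  by (simp add: wnorm_def)

lemma wnorm_nonneg: "wnorm \<beta> w \<ge> 0"
  by (simp add: wnorm_def split: prod.split)

lemma proj_eq_zero_excess:
  fixes S :: "('a::real_inner \<times> 'a \<times> real) set"
  assumes "s \<in> S"
    and excess: "\<And>w. w \<in> S \<Longrightarrow> wnorm \<beta> (w - z) ^ 2 = wnorm \<beta> (s - z) ^ 2 + E w"
    and nonneg: "\<And>w. w \<in> S \<Longrightarrow> E w \<ge> 0"
  shows "proj \<beta> S z = {w \<in> S. E w = 0}"
proof -
  have le_iff: "wnorm \<beta> u \<le> wnorm \<beta> v \<longleftrightarrow> wnorm \<beta> u ^ 2 \<le> wnorm \<beta> v ^ 2" for u v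
    using abs_le_square_iff[of "wnorm \<beta> u" "wnorm \<beta> v"] by (simp add: wnorm_nonneg)
  have "(\<forall>w'\<in>S. wnorm \<beta> (w - z) \<le> wnorm \<beta> (w' - z)) \<longleftrightarrow> E w = 0" if "w \<in> S" for w
  proof
    assume "\<forall>w'\<in>S. wnorm \<beta> (w - z) \<le> wnorm \<beta> (w' - z)"
    then show "E w = 0"
      using \<open>s \<in> S\<close> excess[OF that] nonneg[OF that] by (force simp: le_iff)
  next
    assume "E w = 0"
    then show "\<forall>w'\<in>S. wnorm \<beta> (w - z) \<le> wnorm \<beta> (w' - z)"
      using excess[OF that] excess nonneg by (simp add: le_iff)
  qed
  then show ?thesis
    unfolding proj_def by blast
qed

lemma inner_form_lower_bound:
  fixes a b :: "'a::real_inner"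
  assumes "\<bar>t\<bar> \<le> 1"
  shows "(1 - \<bar>t\<bar>) * (norm a ^ 2 + norm b ^ 2) \<le> norm a ^ 2 + norm b ^ 2 + 2 * t * inner a b"
proof -
  have "\<bar>2 * t * inner a b\<bar> \<le> \<bar>t\<bar> * (2 * (norm a * norm b))"
    using Cauchy_Schwarz_ineq2[of a b] by (simp add: abs_mult mult_left_mono)
  also have "\<dots> \<le> \<bar>t\<bar> * (norm a ^ 2 + norm b ^ 2)"
    using sum_squares_bound[of "norm a" "norm b"] by (simp add: mult_left_mono)
  finally show ?thesis
    by (simp add: algebra_simps)
qed

lemma wnorm_sq_lagrange:
  fixes x y xs ys :: "'a::real_inner"
  assumes "\<beta> \<noteq> 0" "inner x y = \<alpha> * g" "inner xs ys = \<alpha> * gs"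
    and z: "z = (xs + t *\<^sub>R ys, ys + t *\<^sub>R xs, gs - t * \<alpha> / \<beta>^2)"
  shows "wnorm \<beta> ((x, y, g) - z) ^ 2 = wnorm \<beta> ((xs, ys, gs) - z) ^ 2
    + (norm (x - xs) ^ 2 + norm (y - ys) ^ 2 + 2 * t * inner (x - xs) (y - ys) + \<beta>^2 * (g - gs)^2)"
proof -
  have vec: "norm (x - (xs + t *\<^sub>R ys)) ^ 2 + norm (y - (ys + t *\<^sub>R xs)) ^ 2
      = norm (t *\<^sub>R ys) ^ 2 + norm (t *\<^sub>R xs) ^ 2 + norm (x - xs) ^ 2 + norm (y - ys) ^ 2
        + 2 * t * inner (x - xs) (y - ys) - 2 * t * (inner x y - inner xs ys)"
    unfolding power2_norm_eq_inner
    by (simp add: inner_diff_left inner_diff_right inner_add_left inner_add_right inner_commute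
        algebra_simps)
  have scal: "\<beta>^2 * (g - (gs - t * \<alpha> / \<beta>^2))^2
      = \<beta>^2 * (t * \<alpha> / \<beta>^2)^2 + \<beta>^2 * (g - gs)^2 + 2 * t * (\<alpha> * g - \<alpha> * gs)"
    using assms(1) by (simp add: field_simps power2_eq_square)
  show ?thesis
    unfolding z diff_Pair wnorm_sq vec scal using assms(2,3) by simp
qed

lemma proj_Calpha_eq:
  fixes xs ys :: "'a::real_inner"
  assumes "\<beta> \<noteq> 0" "\<bar>t\<bar> \<le> 1" "inner xs ys = \<alpha> * gs"
  shows "proj \<beta> (Calpha \<alpha>) (xs + t *\<^sub>R ys, ys + t *\<^sub>R xs, gs - t * \<alpha> / \<beta>^2) =
    {(x, y, g). inner x y = \<alpha> * g \<and>
       norm (x - xs) ^ 2 + norm (y - ys) ^ 2 + 2 * t * inner (x - xs) (y - ys) + \<beta>^2 * (g - gs)^2 = 0}"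
proof -
  define E :: "'a \<times> 'a \<times> real \<Rightarrow> real" where "E = (\<lambda>(x, y, g).
    norm (x - xs) ^ 2 + norm (y - ys) ^ 2 + 2 * t * inner (x - xs) (y - ys) + \<beta>^2 * (g - gs)^2)"
  have "proj \<beta> (Calpha \<alpha>) (xs + t *\<^sub>R ys, ys + t *\<^sub>R xs, gs - t * \<alpha> / \<beta>^2) =
      {w \<in> Calpha \<alpha>. E w = 0}"
  proof (rule proj_eq_zero_excess)
    show "(xs, ys, gs) \<in> Calpha \<alpha>"
      using assms(3) by (simp add: Calpha_def)
    show "wnorm \<beta> (w - (xs + t *\<^sub>R ys, ys + t *\<^sub>R xs, gs - t * \<alpha> / \<beta>^2)) ^ 2 =
        wnorm \<beta> ((xs, ys, gs) - (xs + t *\<^sub>R ys, ys + t *\<^sub>R xs, gs - t * \<alpha> / \<beta>^2)) ^ 2 + E w"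
      if "w \<in> Calpha \<alpha>" for w
      using that wnorm_sq_lagrange[OF assms(1) _ assms(3)] by (auto simp: Calpha_def E_def)
    show "E w \<ge> 0" for w
    proof -
      obtain x y g where w: "w = (x, y, g)"
        by (cases w)
      have "0 \<le> (1 - \<bar>t\<bar>) * (norm (x - xs) ^ 2 + norm (y - ys) ^ 2)"
        using assms(2) by simp
      also have "\<dots> \<le> norm (x - xs) ^ 2 + norm (y - ys) ^ 2 + 2 * t * inner (x - xs) (y - ys)"
        by (rule inner_form_lower_bound[OF assms(2)])
      finally show ?thesis
        by (simp add: E_def w)
    qed
  qed
  then show ?thesis
    by (auto simp: Calpha_def E_def)
qed

lemma proj_Calpha_singleton:
  fixes xs ys :: "'a::real_inner"
  assumes "\<beta> \<noteq> 0" "\<bar>t\<bar> < 1" "inner xs ys = \<alpha> * gs"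
  shows "proj \<beta> (Calpha \<alpha>) (xs + t *\<^sub>R ys, ys + t *\<^sub>R xs, gs - t * \<alpha> / \<beta>^2) = {(xs, ys, gs)}"
proof -
  have "x = xs \<and> y = ys \<and> g = gs"
    if "norm (x - xs) ^ 2 + norm (y - ys) ^ 2 + 2 * t * inner (x - xs) (y - ys) + \<beta>^2 * (g - gs)^2 = 0"
    for x y g
  proof -
    have "(1 - \<bar>t\<bar>) * (norm (x - xs) ^ 2 + norm (y - ys) ^ 2) + \<beta>^2 * (g - gs)^2 \<le> 0"
      using that inner_form_lower_bound[of t "x - xs" "y - ys"] assms(2) by simp
    moreover have "0 \<le> (1 - \<bar>t\<bar>) * (norm (x - xs) ^ 2 + norm (y - ys) ^ 2)"
      using assms(2) by simp
    moreover have "0 \<le> \<beta>^2 * (g - gs)^2"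
      by simp
    ultimately have "(1 - \<bar>t\<bar>) * (norm (x - xs) ^ 2 + norm (y - ys) ^ 2) = 0" "\<beta>^2 * (g - gs)^2 = 0"
      by linarith+
    then show ?thesis
      using assms(1,2) by (simp add: add_nonneg_eq_0_iff)
  qed
  then show ?thesis
    unfolding proj_Calpha_eq[OF assms(1) less_imp_le[OF assms(2)] assms(3)] using assms(3) by auto
qed

lemma gfun_eq_constraint_defect:
  fixes x0 y0 :: "'a::real_inner"
  assumes "t^2 \<noteq> 1"
  shows "gfun \<alpha> \<beta> x0 y0 \<gamma>0 t = 2 * (inner ((1 / (1 - t^2)) *\<^sub>R (x0 - t *\<^sub>R y0))
    ((1 / (1 - t^2)) *\<^sub>R (y0 - t *\<^sub>R x0)) - \<alpha> * (\<gamma>0 + t * \<alpha> / \<beta>^2))"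
proof -
  define Y where "Y = (t^2 + 1) * (2 * inner x0 y0) - 2 * t * (norm x0 ^ 2 + norm y0 ^ 2)"
  have "inner (x0 - t *\<^sub>R y0) (y0 - t *\<^sub>R x0) = Y / 2"
    unfolding Y_def power2_norm_eq_inner
    by (simp add: inner_diff_left inner_diff_right inner_commute algebra_simps power2_eq_square)
  moreover obtain d where d: "1 - t^2 = d" "d \<noteq> 0"
    using assms by simp
  ultimately show ?thesis
    unfolding gfun_def Let_def Y_def[symmetric] inner_scaleR_left inner_scaleR_right d(1)
    by (simp add: field_simps power2_eq_square)
qed

lemma proj_Calpha_at_gfun_root:
  fixes x0 y0 :: "'a::real_inner"
  assumes "\<beta> \<noteq> 0" "\<bar>t\<bar> < 1" "gfun \<alpha> \<beta> x0 y0 \<gamma>0 t = 0"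
  shows "proj \<beta> (Calpha \<alpha>) (x0, y0, \<gamma>0) =
    {((1 / (1 - t^2)) *\<^sub>R (x0 - t *\<^sub>R y0), (1 / (1 - t^2)) *\<^sub>R (y0 - t *\<^sub>R x0), \<gamma>0 + t * \<alpha> / \<beta>^2)}"
proof -
  define xs where "xs = (1 / (1 - t^2)) *\<^sub>R (x0 - t *\<^sub>R y0)"
  define ys where "ys = (1 / (1 - t^2)) *\<^sub>R (y0 - t *\<^sub>R x0)"
  define gs where "gs = \<gamma>0 + t * \<alpha> / \<beta>^2"
  have t2: "t^2 \<noteq> 1" "1 - t^2 \<noteq> 0"
    using assms(2) abs_square_less_1[of t] by auto
  have "xs + t *\<^sub>R ys = (1 / (1 - t^2)) *\<^sub>R ((1 - t^2) *\<^sub>R x0)"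
    "ys + t *\<^sub>R xs = (1 / (1 - t^2)) *\<^sub>R ((1 - t^2) *\<^sub>R y0)"
    unfolding xs_def ys_def by (simp_all add: algebra_simps power2_eq_square)
  then have z: "(x0, y0, \<gamma>0) = (xs + t *\<^sub>R ys, ys + t *\<^sub>R xs, gs - t * \<alpha> / \<beta>^2)"
    using t2 by (simp add: gs_def)
  have "inner xs ys = \<alpha> * gs"
    using assms(3) unfolding gfun_eq_constraint_defect[OF t2(1)] xs_def ys_def gs_def by simp
  from proj_Calpha_singleton[OF assms(1,2) this] show ?thesis
    unfolding z by (simp add: xs_def ys_def gs_def)
qed

lemma gfun_root_unique:
  fixes x0 y0 :: "'a::real_inner"
  assumes "\<alpha> \<noteq> 0" "\<beta> \<noteq> 0"
    and "\<bar>s\<bar> < 1" "gfun \<alpha> \<beta> x0 y0 \<gamma>0 s = 0" "\<bar>t\<bar> < 1" "gfun \<alpha> \<beta> x0 y0 \<gamma>0 t = 0"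
  shows "s = t"
proof -
  have "\<gamma>0 + s * \<alpha> / \<beta>^2 = \<gamma>0 + t * \<alpha> / \<beta>^2"
    using proj_Calpha_at_gfun_root[OF assms(2,3,4)] proj_Calpha_at_gfun_root[OF assms(2,5,6)]
    by (metis singleton_inject prod.inject)
  then show ?thesis
    using assms(1,2) by simp
qed

lemma proj_Calpha_at_unique_gfun_root:
  fixes x0 y0 :: "'a::real_inner"
  assumes "\<alpha> \<noteq> 0" "\<beta> \<noteq> 0" "\<exists>t \<in> {-1<..<1}. gfun \<alpha> \<beta> x0 y0 \<gamma>0 t = 0"
  shows "(\<exists>!t. t \<in> {-1<..<1} \<and> gfun \<alpha> \<beta> x0 y0 \<gamma>0 t = 0) \<and>
    (\<forall>t \<in> {-1<..<1}. gfun \<alpha> \<beta> x0 y0 \<gamma>0 t = 0 \<longrightarrow>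
       proj \<beta> (Calpha \<alpha>) (x0, y0, \<gamma>0) =
         {((1 / (1 - t^2)) *\<^sub>R (x0 - t *\<^sub>R y0), (1 / (1 - t^2)) *\<^sub>R (y0 - t *\<^sub>R x0),
           \<gamma>0 + t * \<alpha> / \<beta>^2)})"
proof
  have I: "t \<in> {-1<..<1} \<longleftrightarrow> \<bar>t\<bar> < 1" for t :: real
    by auto
  obtain t0 where "\<bar>t0\<bar> < 1" "gfun \<alpha> \<beta> x0 y0 \<gamma>0 t0 = 0"
    using assms(3) by (auto simp: abs_less_iff)
  then show "\<exists>!t. t \<in> {-1<..<1} \<and> gfun \<alpha> \<beta> x0 y0 \<gamma>0 t = 0"
    using gfun_root_unique[OF assms(1,2)] unfolding I by blast
  show "\<forall>t \<in> {-1<..<1}. gfun \<alpha> \<beta> x0 y0 \<gamma>0 t = 0 \<longrightarrow>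
      proj \<beta> (Calpha \<alpha>) (x0, y0, \<gamma>0) =
        {((1 / (1 - t^2)) *\<^sub>R (x0 - t *\<^sub>R y0), (1 / (1 - t^2)) *\<^sub>R (y0 - t *\<^sub>R x0),
          \<gamma>0 + t * \<alpha> / \<beta>^2)}"
    using proj_Calpha_at_gfun_root[OF assms(2)] unfolding Ball_def I by blast
qed

lemma sign_change_imp_root:
  fixes f :: "real \<Rightarrow> real"
  assumes "a \<le> b" "continuous_on {a..b} f" "f a * f b < 0"
  shows "\<exists>t \<in> {a<..<b}. f t = 0"
proof -
  have "\<exists>t. a \<le> t \<and> t \<le> b \<and> f t = 0"
  proof (cases "f a < 0")
    case True
    then have "f b > 0"
      using assms(3) by (simp add: mult_less_0_iff)
    with True show ?thesis
      using IVT'[of f a 0 b] assms(1,2) by simp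
  next
    case False
    then have "f a > 0" "f b < 0"
      using assms(3) by (auto simp: mult_less_0_iff)
    then show ?thesis
      using IVT2'[of f b 0 a] assms(1,2) by simp
  qed
  moreover have "f a \<noteq> 0" "f b \<noteq> 0"
    using assms(3) by auto
  ultimately show ?thesis
    by (metis greaterThanLessThan_iff order_le_less)
qed

lemma gfun_root_exists:
  fixes x0 y0 :: "'a::real_inner"
  assumes "x0 \<noteq> y0" "x0 \<noteq> - y0"
  shows "\<exists>t \<in> {-1<..<1}. gfun \<alpha> \<beta> x0 y0 \<gamma>0 t = 0"
proof -
  define h where "h t = (t^2 + 1) * (2 * inner x0 y0) - 2 * t * (norm x0 ^ 2 + norm y0 ^ 2)
    - (1 - t^2)^2 * (t * (2 * \<alpha>^2 / \<beta>^2) + 2 * \<alpha> * \<gamma>0)" for t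
  have "h (-1) = 2 * norm (x0 + y0) ^ 2" "h 1 = - 2 * norm (x0 - y0) ^ 2"
    unfolding h_def power2_norm_eq_inner
    by (simp_all add: inner_add_left inner_add_right inner_diff_left inner_diff_right inner_commute)
  moreover have "x0 + y0 \<noteq> 0" "x0 - y0 \<noteq> 0"
    using assms by (auto simp: add_eq_0_iff)
  ultimately have "h (-1) * h 1 < 0"
    by (simp add: mult_pos_neg)
  moreover have "continuous_on {-1..1} h"
    unfolding h_def by (intro continuous_intros)
  ultimately obtain t where t: "t \<in> {-1<..<1}" "h t = 0"
    using sign_change_imp_root[of "-1" 1 h] by auto
  then have "1 - t^2 \<noteq> 0"
    using abs_square_less_1[of t] by (auto simp: abs_less_iff)
  then have "gfun \<alpha> \<beta> x0 y0 \<gamma>0 t = h t / (1 - t^2)^2"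
    unfolding gfun_def Let_def h_def by (simp add: field_simps)
  with t show ?thesis
    by auto
qed

lemma gfun_aligned:
  fixes x0 y0 :: "'a::real_inner"
  assumes "\<sigma>^2 = 1" "y0 = \<sigma> *\<^sub>R x0" "\<bar>t\<bar> < 1"
  shows "gfun \<alpha> \<beta> x0 y0 \<gamma>0 t =
    2 * \<sigma> * norm x0 ^ 2 / (1 + \<sigma> * t)^2 - 2 * t * \<alpha>^2 / \<beta>^2 - 2 * \<alpha> * \<gamma>0"
proof -
  have \<sigma>: "\<sigma> = 1 \<or> \<sigma> = -1"
    using assms(1) by (simp add: power2_eq_1_iff)
  have "1 - \<sigma> * t \<noteq> 0" "1 + \<sigma> * t \<noteq> 0"
    using \<sigma> assms(3) by (auto simp: abs_less_iff)
  moreover have "(t^2 + 1) * (2 * inner x0 y0) - 2 * t * (norm x0 ^ 2 + norm y0 ^ 2) = 2 * \<sigma> * norm x0 ^ 2 * (1 - \<sigma> * t)^2"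
    "(1 - t^2)^2 = (1 - \<sigma> * t)^2 * (1 + \<sigma> * t)^2"
    using \<sigma> by (auto simp: assms(2) dot_square_norm algebra_simps power2_eq_square)
  ultimately show ?thesis
    unfolding gfun_def Let_def by simp
qed

lemma gfun_aligned_root_exists:
  fixes x0 y0 :: "'a::real_inner"
  assumes "\<sigma>^2 = 1" "y0 = \<sigma> *\<^sub>R x0" "x0 \<noteq> 0"
    and "norm x0 ^ 2 / 4 < \<sigma> * \<alpha> * (\<gamma>0 + \<sigma> * \<alpha> / \<beta>^2)"
  shows "\<exists>t \<in> {-1<..<1}. gfun \<alpha> \<beta> x0 y0 \<gamma>0 t = 0"
proof -
  define h where "h t = 2 * \<sigma> * norm x0 ^ 2 - (1 + \<sigma> * t)^2 * (t * (2 * \<alpha>^2 / \<beta>^2) + 2 * \<alpha> * \<gamma>0)" for t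
  have \<sigma>: "\<sigma> = 1 \<or> \<sigma> = -1"
    using assms(1) by (simp add: power2_eq_1_iff)
  have "h (-1) * h 1 = 4 * norm x0 ^ 2 * (norm x0 ^ 2 - 4 * (\<sigma> * \<alpha> * (\<gamma>0 + \<sigma> * \<alpha> / \<beta>^2)))"
    using \<sigma> by (auto simp: h_def algebra_simps power2_eq_square)
  also have "\<dots> < 0"
    using assms(3,4) by (intro mult_pos_neg) (auto simp: mult.commute)
  finally have "h (-1) * h 1 < 0" .
  moreover have "continuous_on {-1..1} h"
    unfolding h_def by (intro continuous_intros)
  ultimately obtain t where t: "t \<in> {-1<..<1}" "h t = 0"
    using sign_change_imp_root[of "-1" 1 h] by auto
  then have t1: "\<bar>t\<bar> < 1" and "1 + \<sigma> * t \<noteq> 0"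
    using \<sigma> by auto
  then have "gfun \<alpha> \<beta> x0 y0 \<gamma>0 t = h t / (1 + \<sigma> * t)^2"
    unfolding gfun_aligned[OF assms(1,2) t1] h_def by (simp add: field_simps)
  with t show ?thesis
    by auto
qed

lemma proj_Calpha_antipodal_interior:
  fixes x0 :: "'a::real_inner"
  assumes "\<alpha> \<noteq> 0" "\<beta> \<noteq> 0" "x0 \<noteq> 0" "\<alpha> * (\<gamma>0 - \<alpha> / \<beta>^2) < - (norm x0 ^ 2 / 4)"
  shows "\<exists>!t. t \<in> {-1<..<1} \<and> g1fun \<alpha> \<beta> x0 \<gamma>0 t = 0"
    and "\<forall>t \<in> {-1<..<1}. g1fun \<alpha> \<beta> x0 \<gamma>0 t = 0 \<longrightarrow>
       proj \<beta> (Calpha \<alpha>) (x0, - x0, \<gamma>0) =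
         {((1 / (1 - t)) *\<^sub>R x0, (1 / (1 - t)) *\<^sub>R (- x0), \<gamma>0 + t * \<alpha> / \<beta>^2)}"
proof -
  have aligned: "(-1)^2 = (1::real)" "- x0 = (-1) *\<^sub>R x0"
    by simp_all
  have "\<exists>t \<in> {-1<..<1}. gfun \<alpha> \<beta> x0 (- x0) \<gamma>0 t = 0"
    using assms(4) by (intro gfun_aligned_root_exists[OF aligned assms(3)]) (simp add: algebra_simps)
  note proj = proj_Calpha_at_unique_gfun_root[OF assms(1,2) this]
  have root_iff: "t \<in> {-1<..<1} \<and> g1fun \<alpha> \<beta> x0 \<gamma>0 t = 0 \<longleftrightarrow>
      t \<in> {-1<..<1} \<and> gfun \<alpha> \<beta> x0 (- x0) \<gamma>0 t = 0"
    for t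
    using gfun_aligned[OF aligned, of t] by (auto simp: g1fun_def abs_less_iff)
  have point: "(1 / (1 - t^2)) *\<^sub>R (x0 - t *\<^sub>R - x0) = (1 / (1 - t)) *\<^sub>R x0"
    "(1 / (1 - t^2)) *\<^sub>R (- x0 - t *\<^sub>R x0) = (1 / (1 - t)) *\<^sub>R (- x0)" if "t \<in> {-1<..<1}" for t
  proof -
    have vec: "x0 - t *\<^sub>R - x0 = (1 + t) *\<^sub>R x0" "- x0 - t *\<^sub>R x0 = (1 + t) *\<^sub>R (- x0)"
      by (simp_all add: algebra_simps)
    have "1 - t \<noteq> 0" "1 + t \<noteq> 0"
      using that by auto
    moreover have "1 - t^2 = (1 - t) * (1 + t)"
      by (simp add: power2_eq_square algebra_simps)
    ultimately have "1 / (1 - t^2) * (1 + t) = 1 / (1 - t)"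
      by simp
    with vec show "(1 / (1 - t^2)) *\<^sub>R (x0 - t *\<^sub>R - x0) = (1 / (1 - t)) *\<^sub>R x0"
      "(1 / (1 - t^2)) *\<^sub>R (- x0 - t *\<^sub>R x0) = (1 / (1 - t)) *\<^sub>R (- x0)"
      by simp_all
  qed
  show "\<exists>!t. t \<in> {-1<..<1} \<and> g1fun \<alpha> \<beta> x0 \<gamma>0 t = 0"
    unfolding root_iff using proj ..
  show "\<forall>t \<in> {-1<..<1}. g1fun \<alpha> \<beta> x0 \<gamma>0 t = 0 \<longrightarrow>
      proj \<beta> (Calpha \<alpha>) (x0, - x0, \<gamma>0) =
        {((1 / (1 - t)) *\<^sub>R x0, (1 / (1 - t)) *\<^sub>R (- x0), \<gamma>0 + t * \<alpha> / \<beta>^2)}"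
  proof (intro ballI impI)
    fix t
    assume t: "t \<in> {-1<..<1}" "g1fun \<alpha> \<beta> x0 \<gamma>0 t = 0"
    then have "proj \<beta> (Calpha \<alpha>) (x0, - x0, \<gamma>0) = {((1 / (1 - t^2)) *\<^sub>R (x0 - t *\<^sub>R - x0),
        (1 / (1 - t^2)) *\<^sub>R (- x0 - t *\<^sub>R x0), \<gamma>0 + t * \<alpha> / \<beta>^2)}"
      using proj root_iff by blast
    then show "proj \<beta> (Calpha \<alpha>) (x0, - x0, \<gamma>0) =
        {((1 / (1 - t)) *\<^sub>R x0, (1 / (1 - t)) *\<^sub>R (- x0), \<gamma>0 + t * \<alpha> / \<beta>^2)}"
      by (simp only: point[OF t(1)])
  qed
qed

lemma proj_Calpha_diagonal_interior:
  fixes x0 :: "'a::real_inner"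
  assumes "\<alpha> \<noteq> 0" "\<beta> \<noteq> 0" "x0 \<noteq> 0" "\<alpha> * (\<gamma>0 + \<alpha> / \<beta>^2) > norm x0 ^ 2 / 4"
  shows "\<exists>!t. t \<in> {-1<..<1} \<and> g2fun \<alpha> \<beta> x0 \<gamma>0 t = 0"
    and "\<forall>t \<in> {-1<..<1}. g2fun \<alpha> \<beta> x0 \<gamma>0 t = 0 \<longrightarrow>
       proj \<beta> (Calpha \<alpha>) (x0, x0, \<gamma>0) =
         {((1 / (1 + t)) *\<^sub>R x0, (1 / (1 + t)) *\<^sub>R x0, \<gamma>0 + t * \<alpha> / \<beta>^2)}"
proof -
  have aligned: "1^2 = (1::real)" "x0 = 1 *\<^sub>R x0"
    by simp_all
  have "\<exists>t \<in> {-1<..<1}. gfun \<alpha> \<beta> x0 x0 \<gamma>0 t = 0"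
    using assms(4) by (intro gfun_aligned_root_exists[OF aligned assms(3)]) (simp add: algebra_simps)
  note proj = proj_Calpha_at_unique_gfun_root[OF assms(1,2) this]
  have root_iff: "t \<in> {-1<..<1} \<and> g2fun \<alpha> \<beta> x0 \<gamma>0 t = 0 \<longleftrightarrow>
      t \<in> {-1<..<1} \<and> gfun \<alpha> \<beta> x0 x0 \<gamma>0 t = 0"
    for t
    using gfun_aligned[OF aligned, of t] by (auto simp: g2fun_def abs_less_iff)
  have point: "(1 / (1 - t^2)) *\<^sub>R (x0 - t *\<^sub>R x0) = (1 / (1 + t)) *\<^sub>R x0" if "t \<in> {-1<..<1}" for t
  proof -
    have vec: "x0 - t *\<^sub>R x0 = (1 - t) *\<^sub>R x0"
      by (simp add: algebra_simps)
    have "1 - t \<noteq> 0" "1 + t \<noteq> 0"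
      using that by auto
    moreover have "1 - t^2 = (1 + t) * (1 - t)"
      by (simp add: power2_eq_square algebra_simps)
    ultimately have "1 / (1 - t^2) * (1 - t) = 1 / (1 + t)"
      by simp
    with vec show ?thesis
      by simp
  qed
  show "\<exists>!t. t \<in> {-1<..<1} \<and> g2fun \<alpha> \<beta> x0 \<gamma>0 t = 0"
    unfolding root_iff using proj ..
  show "\<forall>t \<in> {-1<..<1}. g2fun \<alpha> \<beta> x0 \<gamma>0 t = 0 \<longrightarrow>
      proj \<beta> (Calpha \<alpha>) (x0, x0, \<gamma>0) =
        {((1 / (1 + t)) *\<^sub>R x0, (1 / (1 + t)) *\<^sub>R x0, \<gamma>0 + t * \<alpha> / \<beta>^2)}"
  proof (intro ballI impI)
    fix t
    assume t: "t \<in> {-1<..<1}" "g2fun \<alpha> \<beta> x0 \<gamma>0 t = 0"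
    then have "proj \<beta> (Calpha \<alpha>) (x0, x0, \<gamma>0) = {((1 / (1 - t^2)) *\<^sub>R (x0 - t *\<^sub>R x0),
        (1 / (1 - t^2)) *\<^sub>R (x0 - t *\<^sub>R x0), \<gamma>0 + t * \<alpha> / \<beta>^2)}"
      using proj root_iff by blast
    then show "proj \<beta> (Calpha \<alpha>) (x0, x0, \<gamma>0) =
        {((1 / (1 + t)) *\<^sub>R x0, (1 / (1 + t)) *\<^sub>R x0, \<gamma>0 + t * \<alpha> / \<beta>^2)}"
      by (simp only: point[OF t(1)])
  qed
qed

lemma exists_norm_eq:
  assumes "\<exists>z::'a::real_normed_vector. z \<noteq> 0" "r \<ge> 0"
  shows "\<exists>u::'a. norm u = r"
proof -
  obtain z :: 'a where "z \<noteq> 0"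
    using assms(1) by blast
  then have "norm ((r / norm z) *\<^sub>R z) = r"
    using assms(2) by simp
  then show ?thesis ..
qed

lemma sphere_image_singleton_iff:
  fixes f :: "'a::real_normed_vector \<Rightarrow> 'b"
  assumes "\<exists>z::'a. z \<noteq> 0" "inj f" "r \<ge> 0"
  shows "(\<exists>w. {f u | u. norm u = r} = {w}) \<longleftrightarrow> r = 0"
proof
  assume "\<exists>w. {f u | u. norm u = r} = {w}"
  then obtain w where w: "{f u | u. norm u = r} = {w}"
    by blast
  obtain u :: 'a where u: "norm u = r"
    using exists_norm_eq[OF assms(1,3)] ..
  then have "f u \<in> {f v | v. norm v = r}" "f (- u) \<in> {f v | v. norm v = r}"
    by (metis (mono_tags, lifting) mem_Collect_eq norm_minus_cancel)+
  then have "f u = w" "f (- u) = w"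
    using w by auto
  then have "u = - u"
    using assms(2) by (auto dest: injD)
  then show "r = 0"
    using u by (simp add: eq_neg_iff_add_eq_0 flip: scaleR_2)
next
  assume "r = 0"
  then show "\<exists>w. {f u | u. norm u = r} = {w}"
    by auto
qed

lemma inner_aligned_param:
  fixes x0 u :: "'a::real_inner"
  assumes "\<sigma>^2 = 1"
  shows "inner ((1/2) *\<^sub>R x0 - \<sigma> *\<^sub>R ((1 / sqrt 2) *\<^sub>R u))
      (\<sigma> *\<^sub>R ((1/2) *\<^sub>R x0) + (1 / sqrt 2) *\<^sub>R u)
    = \<sigma> * (norm x0 ^ 2 / 4 - norm u ^ 2 / 2)"
proof -
  have "(1 / sqrt 2) * (1 / sqrt 2) = (1 / 2 :: real)"
    by (simp flip: real_sqrt_mult)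
  with assms show ?thesis
    by (simp add: dot_square_norm inner_add_left inner_add_right inner_diff_left inner_diff_right
        inner_commute algebra_simps power2_eq_square)
qed

lemma aligned_slice_param:
  fixes x y x0 :: "'a::real_inner"
  assumes "\<sigma>^2 = 1"
  shows "inner x y = c \<and> x + \<sigma> *\<^sub>R y = x0 \<longleftrightarrow>
    (\<exists>u. x = (1/2) *\<^sub>R x0 - \<sigma> *\<^sub>R ((1 / sqrt 2) *\<^sub>R u) \<and>
         y = \<sigma> *\<^sub>R ((1/2) *\<^sub>R x0) + (1 / sqrt 2) *\<^sub>R u \<and>
         norm u ^ 2 = norm x0 ^ 2 / 2 - 2 * (\<sigma> * c))"
proof -
  have \<sigma>\<sigma>: "\<sigma> * \<sigma> = 1"
    using assms by (simp add: power2_eq_square)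
  have half: "(1/2) *\<^sub>R v + (1/2) *\<^sub>R v = v" for v :: 'a
    by (simp flip: scaleR_add_left)
  have inner_iff: "\<sigma> * (norm x0 ^ 2 / 4 - norm u ^ 2 / 2) = c \<longleftrightarrow> norm u ^ 2 = norm x0 ^ 2 / 2 - 2 * (\<sigma> * c)"
    for u :: 'a
  proof -
    have "\<sigma> * (norm x0 ^ 2 / 4 - norm u ^ 2 / 2) = c \<longleftrightarrow>
        (\<sigma> * \<sigma>) * (norm x0 ^ 2 / 4 - norm u ^ 2 / 2) = \<sigma> * c"
      using \<sigma>\<sigma> by (auto simp: mult.assoc)
    then show ?thesis
      using \<sigma>\<sigma> by (auto simp: field_simps)
  qed
  show ?thesis
  proof
    assume xy: "inner x y = c \<and> x + \<sigma> *\<^sub>R y = x0"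
    define u where "u = sqrt 2 *\<^sub>R (y - \<sigma> *\<^sub>R ((1/2) *\<^sub>R x0))"
    have y: "y = \<sigma> *\<^sub>R ((1/2) *\<^sub>R x0) + (1 / sqrt 2) *\<^sub>R u"
      by (simp add: u_def)
    have "x = x0 - \<sigma> *\<^sub>R y"
      using xy by (simp add: eq_diff_eq)
    also have "\<dots> = (1/2) *\<^sub>R x0 - \<sigma> *\<^sub>R ((1 / sqrt 2) *\<^sub>R u)"
      using \<sigma>\<sigma> half[of x0] unfolding y by (simp add: algebra_simps)
    finally have x: "x = (1/2) *\<^sub>R x0 - \<sigma> *\<^sub>R ((1 / sqrt 2) *\<^sub>R u)" .
    have "norm u ^ 2 = norm x0 ^ 2 / 2 - 2 * (\<sigma> * c)"
      using xy unfolding inner_iff[symmetric] inner_aligned_param[OF assms, symmetric] x y by simp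
    with x y show "\<exists>u. x = (1/2) *\<^sub>R x0 - \<sigma> *\<^sub>R ((1 / sqrt 2) *\<^sub>R u) \<and>
        y = \<sigma> *\<^sub>R ((1/2) *\<^sub>R x0) + (1 / sqrt 2) *\<^sub>R u \<and> norm u ^ 2 = norm x0 ^ 2 / 2 - 2 * (\<sigma> * c)"
      by blast
  next
    assume "\<exists>u. x = (1/2) *\<^sub>R x0 - \<sigma> *\<^sub>R ((1 / sqrt 2) *\<^sub>R u) \<and>
        y = \<sigma> *\<^sub>R ((1/2) *\<^sub>R x0) + (1 / sqrt 2) *\<^sub>R u \<and> norm u ^ 2 = norm x0 ^ 2 / 2 - 2 * (\<sigma> * c)"
    then obtain u where x: "x = (1/2) *\<^sub>R x0 - \<sigma> *\<^sub>R ((1 / sqrt 2) *\<^sub>R u)"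
      and y: "y = \<sigma> *\<^sub>R ((1/2) *\<^sub>R x0) + (1 / sqrt 2) *\<^sub>R u"
      and u: "norm u ^ 2 = norm x0 ^ 2 / 2 - 2 * (\<sigma> * c)"
      by blast
    have "inner x y = c"
      unfolding x y inner_aligned_param[OF assms] inner_iff by (rule u)
    moreover have "x + \<sigma> *\<^sub>R y = x0"
      using \<sigma>\<sigma> half[of x0] unfolding x y by (simp add: algebra_simps)
    ultimately show "inner x y = c \<and> x + \<sigma> *\<^sub>R y = x0" ..
  qed
qed

lemma proj_Calpha_aligned_boundary_affine:
  fixes x0 :: "'a::real_inner"
  assumes "\<exists>z::'a. z \<noteq> 0" "\<beta> \<noteq> 0" "\<sigma>^2 = 1"
    and "\<sigma> * \<alpha> * (\<gamma>0 + \<sigma> * \<alpha> / \<beta>^2) \<le> norm x0 ^ 2 / 4"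
  shows "proj \<beta> (Calpha \<alpha>) (x0, \<sigma> *\<^sub>R x0, \<gamma>0) =
    {(x, y, g). inner x y = \<alpha> * g \<and> g = \<gamma>0 + \<sigma> * \<alpha> / \<beta>^2 \<and> x + \<sigma> *\<^sub>R y = x0}"
proof -
  define gs where "gs = \<gamma>0 + \<sigma> * \<alpha> / \<beta>^2"
  have R: "0 \<le> norm x0 ^ 2 / 2 - 2 * (\<sigma> * (\<alpha> * gs))"
    using assms(4) unfolding gs_def by linarith
  obtain u :: 'a where "norm u = sqrt (norm x0 ^ 2 / 2 - 2 * (\<sigma> * (\<alpha> * gs)))"
    using exists_norm_eq[OF assms(1) real_sqrt_ge_zero[OF R]] ..
  then have "norm u ^ 2 = norm x0 ^ 2 / 2 - 2 * (\<sigma> * (\<alpha> * gs))"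
    using R by simp
  then obtain xs ys where f: "inner xs ys = \<alpha> * gs" and x0: "xs + \<sigma> *\<^sub>R ys = x0"
    using aligned_slice_param[OF assms(3)] by blast
  have \<sigma>\<sigma>: "\<sigma> * \<sigma> = 1"
    using assms(3) by (simp add: power2_eq_square)
  then have "ys + \<sigma> *\<^sub>R xs = \<sigma> *\<^sub>R x0"
    unfolding x0[symmetric] by (simp add: algebra_simps)
  with x0 have z: "(x0, \<sigma> *\<^sub>R x0, \<gamma>0) =
      (xs + \<sigma> *\<^sub>R ys, ys + \<sigma> *\<^sub>R xs, gs - \<sigma> * \<alpha> / \<beta>^2)"
    by (simp add: gs_def)
  have \<sigma>1: "\<bar>\<sigma>\<bar> \<le> 1"
    using assms(3) by (auto simp: power2_eq_1_iff)
  have square: "norm a ^ 2 + norm b ^ 2 + 2 * \<sigma> * inner a b = norm (a + \<sigma> *\<^sub>R b) ^ 2" for a b :: 'a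
    unfolding power2_norm_eq_inner using \<sigma>\<sigma>
    by (simp add: inner_add_left inner_add_right inner_commute algebra_simps)
  have excess_zero_iff: "norm ((x - xs) + \<sigma> *\<^sub>R (y - ys)) ^ 2 + \<beta>^2 * (g - gs)^2 = 0 \<longleftrightarrow>
      g = gs \<and> x + \<sigma> *\<^sub>R y = x0" for x y g
  proof -
    have "(x - xs) + \<sigma> *\<^sub>R (y - ys) = (x + \<sigma> *\<^sub>R y) - x0"
      unfolding x0[symmetric] by (simp add: algebra_simps)
    then have "(x - xs) + \<sigma> *\<^sub>R (y - ys) = 0 \<longleftrightarrow> x + \<sigma> *\<^sub>R y = x0"
      by (simp only: right_minus_eq)
    moreover have "norm v ^ 2 + \<beta>^2 * (g - gs)^2 = 0 \<longleftrightarrow> v = 0 \<and> g = gs" for v :: 'a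
      using assms(2) by (simp add: add_nonneg_eq_0_iff)
    ultimately show ?thesis
      by blast
  qed
  show ?thesis
    unfolding z proj_Calpha_eq[OF assms(2) \<sigma>1 f] unfolding square excess_zero_iff
    by (auto simp: gs_def)
qed

lemma proj_Calpha_aligned_boundary:
  fixes x0 :: "'a::real_inner"
  assumes "\<exists>z::'a. z \<noteq> 0" "\<beta> \<noteq> 0" "\<sigma>^2 = 1"
    and "\<sigma> * \<alpha> * (\<gamma>0 + \<sigma> * \<alpha> / \<beta>^2) \<le> norm x0 ^ 2 / 4"
  shows "proj \<beta> (Calpha \<alpha>) (x0, \<sigma> *\<^sub>R x0, \<gamma>0) =
      {((1/2) *\<^sub>R x0 - \<sigma> *\<^sub>R ((1 / sqrt 2) *\<^sub>R u), \<sigma> *\<^sub>R ((1/2) *\<^sub>R x0) + (1 / sqrt 2) *\<^sub>R u,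
        \<gamma>0 + \<sigma> * \<alpha> / \<beta>^2)
        | u. norm u = sqrt (- 2 * \<sigma> * \<alpha> * (\<gamma>0 + \<sigma> * \<alpha> / \<beta>^2) + norm x0 ^ 2 / 2)}"
    (is "_ = ?S")
    and "(\<exists>w. proj \<beta> (Calpha \<alpha>) (x0, \<sigma> *\<^sub>R x0, \<gamma>0) = {w}) \<longleftrightarrow>
      \<sigma> * \<alpha> * (\<gamma>0 + \<sigma> * \<alpha> / \<beta>^2) = norm x0 ^ 2 / 4"
proof -
  define gs where "gs = \<gamma>0 + \<sigma> * \<alpha> / \<beta>^2"
  define R where "R = - 2 * \<sigma> * \<alpha> * gs + norm x0 ^ 2 / 2"
  have R: "R \<ge> 0"
    using assms(4) unfolding R_def gs_def by linarith
  have norm_iff: "norm u = sqrt R \<longleftrightarrow> norm u ^ 2 = norm x0 ^ 2 / 2 - 2 * (\<sigma> * (\<alpha> * gs))" for u :: 'a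
  proof -
    have "norm u = sqrt R \<longleftrightarrow> norm u ^ 2 = R"
      using R by (metis norm_ge_zero real_sqrt_pow2 real_sqrt_unique)
    then show ?thesis
      by (simp add: R_def algebra_simps)
  qed
  show proj_eq: "proj \<beta> (Calpha \<alpha>) (x0, \<sigma> *\<^sub>R x0, \<gamma>0) = ?S"
  proof (rule set_eqI)
    fix w :: "'a \<times> 'a \<times> real"
    obtain x y g where w: "w = (x, y, g)"
      by (cases w)
    have "w \<in> proj \<beta> (Calpha \<alpha>) (x0, \<sigma> *\<^sub>R x0, \<gamma>0) \<longleftrightarrow>
        g = gs \<and> (inner x y = \<alpha> * gs \<and> x + \<sigma> *\<^sub>R y = x0)"
      unfolding proj_Calpha_aligned_boundary_affine[OF assms] gs_def w by auto
    also have "\<dots> \<longleftrightarrow> g = gs \<and> (\<exists>u. x = (1/2) *\<^sub>R x0 - \<sigma> *\<^sub>R ((1 / sqrt 2) *\<^sub>R u) \<and>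
        y = \<sigma> *\<^sub>R ((1/2) *\<^sub>R x0) + (1 / sqrt 2) *\<^sub>R u \<and> norm u = sqrt R)"
      unfolding aligned_slice_param[OF assms(3)] norm_iff ..
    also have "\<dots> \<longleftrightarrow> w \<in> ?S"
      unfolding w R_def gs_def by blast
    finally show "w \<in> proj \<beta> (Calpha \<alpha>) (x0, \<sigma> *\<^sub>R x0, \<gamma>0) \<longleftrightarrow> w \<in> ?S" .
  qed
  define f where "f u = ((1/2) *\<^sub>R x0 - \<sigma> *\<^sub>R ((1 / sqrt 2) *\<^sub>R u),
    \<sigma> *\<^sub>R ((1/2) *\<^sub>R x0) + (1 / sqrt 2) *\<^sub>R u, gs)" for u :: 'a
  have "inj f"
    by (rule injI) (simp add: f_def)
  have S: "?S = {f u | u. norm u = sqrt R}"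
    unfolding f_def R_def gs_def ..
  have "(\<exists>w. ?S = {w}) \<longleftrightarrow> sqrt R = 0"
    unfolding S by (rule sphere_image_singleton_iff[OF assms(1) \<open>inj f\<close> real_sqrt_ge_zero[OF R]])
  also have "\<dots> \<longleftrightarrow> \<sigma> * \<alpha> * (\<gamma>0 + \<sigma> * \<alpha> / \<beta>^2) = norm x0 ^ 2 / 4"
    unfolding R_def gs_def by (auto simp: algebra_simps)
  finally show "(\<exists>w. proj \<beta> (Calpha \<alpha>) (x0, \<sigma> *\<^sub>R x0, \<gamma>0) = {w}) \<longleftrightarrow>
      \<sigma> * \<alpha> * (\<gamma>0 + \<sigma> * \<alpha> / \<beta>^2) = norm x0 ^ 2 / 4"
    unfolding proj_eq .
qed

lemma proj_Calpha_antipodal_boundary: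
  fixes x0 :: "'a::real_inner"
  assumes "\<exists>z::'a. z \<noteq> 0" "\<beta> \<noteq> 0" "\<alpha> * (\<gamma>0 - \<alpha> / \<beta>^2) \<ge> - (norm x0 ^ 2 / 4)"
  shows "proj \<beta> (Calpha \<alpha>) (x0, - x0, \<gamma>0) =
      {((1/2) *\<^sub>R x0 + (1 / sqrt 2) *\<^sub>R u, - ((1/2) *\<^sub>R x0) + (1 / sqrt 2) *\<^sub>R u, \<gamma>0 - \<alpha> / \<beta>^2)
        | u. norm u = sqrt (2 * \<alpha> * (\<gamma>0 - \<alpha> / \<beta>^2) + norm x0 ^ 2 / 2)}"
    and "(\<exists>w. proj \<beta> (Calpha \<alpha>) (x0, - x0, \<gamma>0) = {w}) \<longleftrightarrow>
      \<alpha> * (\<gamma>0 - \<alpha> / \<beta>^2) = - (norm x0 ^ 2 / 4)"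
proof -
  have "(-1) * \<alpha> * (\<gamma>0 + (-1) * \<alpha> / \<beta>^2) \<le> norm x0 ^ 2 / 4"
    using assms(3) by simp
  note boundary = proj_Calpha_aligned_boundary[OF assms(1,2) _ this, simplified]
  then show "proj \<beta> (Calpha \<alpha>) (x0, - x0, \<gamma>0) =
      {((1/2) *\<^sub>R x0 + (1 / sqrt 2) *\<^sub>R u, - ((1/2) *\<^sub>R x0) + (1 / sqrt 2) *\<^sub>R u, \<gamma>0 - \<alpha> / \<beta>^2)
        | u. norm u = sqrt (2 * \<alpha> * (\<gamma>0 - \<alpha> / \<beta>^2) + norm x0 ^ 2 / 2)}"
    by simp
  from boundary show "(\<exists>w. proj \<beta> (Calpha \<alpha>) (x0, - x0, \<gamma>0) = {w}) \<longleftrightarrow>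
      \<alpha> * (\<gamma>0 - \<alpha> / \<beta>^2) = - (norm x0 ^ 2 / 4)"
    by (auto simp: field_simps)
qed

lemma proj_Calpha_diagonal_boundary:
  fixes x0 :: "'a::real_inner"
  assumes "\<exists>z::'a. z \<noteq> 0" "\<beta> \<noteq> 0" "\<alpha> * (\<gamma>0 + \<alpha> / \<beta>^2) \<le> norm x0 ^ 2 / 4"
  shows "proj \<beta> (Calpha \<alpha>) (x0, x0, \<gamma>0) =
      {((1/2) *\<^sub>R x0 - (1 / sqrt 2) *\<^sub>R v, (1/2) *\<^sub>R x0 + (1 / sqrt 2) *\<^sub>R v, \<gamma>0 + \<alpha> / \<beta>^2)
        | v. norm v = sqrt (- 2 * \<alpha> * (\<gamma>0 + \<alpha> / \<beta>^2) + norm x0 ^ 2 / 2)}"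
    and "(\<exists>w. proj \<beta> (Calpha \<alpha>) (x0, x0, \<gamma>0) = {w}) \<longleftrightarrow>
      \<alpha> * (\<gamma>0 + \<alpha> / \<beta>^2) = norm x0 ^ 2 / 4"
  using proj_Calpha_aligned_boundary[OF assms(1,2), of 1 \<alpha> \<gamma>0 x0] assms(3) by simp_all

lemma proj_Calpha_origin:
  fixes \<gamma>0 :: real
  assumes "\<alpha> \<noteq> 0" "\<beta> \<noteq> 0" "\<bar>\<alpha> * \<gamma>0\<bar> \<le> \<alpha>^2 / \<beta>^2"
  shows "proj \<beta> (Calpha \<alpha>) ((0::'a::real_inner), (0::'a), \<gamma>0) = {(0, 0, 0)}"
proof -
  define t where "t = - \<gamma>0 * \<beta>^2 / \<alpha>"
  have "\<bar>t\<bar> * (\<alpha>^2 / \<beta>^2) = \<bar>\<alpha> * \<gamma>0\<bar>"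
    using assms(1,2) by (simp add: t_def abs_mult power2_eq_square field_simps)
  then have "\<bar>t\<bar> * (\<alpha>^2 / \<beta>^2) \<le> 1 * (\<alpha>^2 / \<beta>^2)"
    using assms(3) by simp
  moreover have "0 < \<alpha>^2 / \<beta>^2"
    using assms(1,2) by simp
  ultimately have t: "\<bar>t\<bar> \<le> 1"
    by (rule mult_right_le_imp_le)
  have zero: "x = 0 \<and> y = 0 \<and> g = 0"
    if "inner x y = \<alpha> * g" "norm x ^ 2 + norm y ^ 2 + 2 * t * inner x y + \<beta>^2 * g^2 = 0" for x y :: 'a and g
  proof -
    have "0 \<le> (1 - \<bar>t\<bar>) * (norm x ^ 2 + norm y ^ 2)"
      using t by simp
    also have "\<dots> \<le> norm x ^ 2 + norm y ^ 2 + 2 * t * inner x y"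
      by (rule inner_form_lower_bound[OF t])
    moreover have "0 \<le> \<beta>^2 * g^2"
      by simp
    ultimately have "\<beta>^2 * g^2 = 0"
      using that(2) by linarith
    then have "g = 0"
      using assms(2) by simp
    then have "norm x ^ 2 + norm y ^ 2 = 0"
      using that by simp
    then show ?thesis
      using \<open>g = 0\<close> by (simp add: add_nonneg_eq_0_iff)
  qed
  have z: "((0::'a), (0::'a), \<gamma>0) = (0 + t *\<^sub>R 0, 0 + t *\<^sub>R 0, 0 - t * \<alpha> / \<beta>^2)"
    using assms(1,2) by (simp add: t_def)
  have "inner (0::'a) 0 = \<alpha> * 0"
    by simp
  from proj_Calpha_eq[OF assms(2) t this] zero show ?thesis
    unfolding z by auto
qed

lemma proj_Calpha_origin_antipodal:
  assumes "\<exists>z::'a::real_inner. z \<noteq> 0" "\<beta> \<noteq> 0" "\<alpha> * \<gamma>0 > \<alpha>^2 / \<beta>^2"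
  shows "proj \<beta> (Calpha \<alpha>) ((0::'a), (0::'a), \<gamma>0) =
      {((1 / sqrt 2) *\<^sub>R u, (1 / sqrt 2) *\<^sub>R u, \<gamma>0 - \<alpha> / \<beta>^2)
        | u. norm u = sqrt (2 * \<alpha> * (\<gamma>0 - \<alpha> / \<beta>^2))}"
    and "\<not> (\<exists>w. proj \<beta> (Calpha \<alpha>) ((0::'a), (0::'a), \<gamma>0) = {w})"
proof -
  have "\<alpha> * (\<gamma>0 - \<alpha> / \<beta>^2) > 0"
    using assms(3) by (simp add: algebra_simps power2_eq_square)
  then have ge: "\<alpha> * (\<gamma>0 - \<alpha> / \<beta>^2) \<ge> - (norm (0::'a) ^ 2 / 4)"
    and ne: "\<alpha> * (\<gamma>0 - \<alpha> / \<beta>^2) \<noteq> - (norm (0::'a) ^ 2 / 4)"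
    by auto
  note boundary = proj_Calpha_antipodal_boundary[OF assms(1,2) ge]
  then show "proj \<beta> (Calpha \<alpha>) ((0::'a), (0::'a), \<gamma>0) =
      {((1 / sqrt 2) *\<^sub>R u, (1 / sqrt 2) *\<^sub>R u, \<gamma>0 - \<alpha> / \<beta>^2)
        | u. norm u = sqrt (2 * \<alpha> * (\<gamma>0 - \<alpha> / \<beta>^2))}"
    by simp
  show "\<not> (\<exists>w. proj \<beta> (Calpha \<alpha>) ((0::'a), (0::'a), \<gamma>0) = {w})"
    using boundary(2) ne by simp
qed

lemma proj_Calpha_origin_diagonal:
  assumes "\<exists>z::'a::real_inner. z \<noteq> 0" "\<beta> \<noteq> 0" "\<alpha> * \<gamma>0 < - (\<alpha>^2 / \<beta>^2)"
  shows "proj \<beta> (Calpha \<alpha>) ((0::'a), (0::'a), \<gamma>0) =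
      {(- ((1 / sqrt 2) *\<^sub>R v), (1 / sqrt 2) *\<^sub>R v, \<gamma>0 + \<alpha> / \<beta>^2)
        | v. norm v = sqrt (- 2 * \<alpha> * (\<gamma>0 + \<alpha> / \<beta>^2))}"
    and "\<not> (\<exists>w. proj \<beta> (Calpha \<alpha>) ((0::'a), (0::'a), \<gamma>0) = {w})"
proof -
  have "\<alpha> * (\<gamma>0 + \<alpha> / \<beta>^2) < 0"
    using assms(3) by (simp add: algebra_simps power2_eq_square)
  then have le: "\<alpha> * (\<gamma>0 + \<alpha> / \<beta>^2) \<le> norm (0::'a) ^ 2 / 4"
    and ne: "\<alpha> * (\<gamma>0 + \<alpha> / \<beta>^2) \<noteq> norm (0::'a) ^ 2 / 4"
    by auto
  note boundary = proj_Calpha_diagonal_boundary[OF assms(1,2) le]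
  then show "proj \<beta> (Calpha \<alpha>) ((0::'a), (0::'a), \<gamma>0) =
      {(- ((1 / sqrt 2) *\<^sub>R v), (1 / sqrt 2) *\<^sub>R v, \<gamma>0 + \<alpha> / \<beta>^2)
        | v. norm v = sqrt (- 2 * \<alpha> * (\<gamma>0 + \<alpha> / \<beta>^2))}"
    by simp
  show "\<not> (\<exists>w. proj \<beta> (Calpha \<alpha>) ((0::'a), (0::'a), \<gamma>0) = {w})"
    using boundary(2) ne by simp
qed

theorem mainTheorem2:
  fixes \<alpha> \<beta> \<gamma>0 :: real and x0 y0 :: "'a::{real_inner, complete_space}"
  assumes nontriv: "\<exists>z::'a. z \<noteq> 0"
    and alpha: "\<alpha> \<noteq> 0" and beta: "\<beta> > 0"
  shows
  \<comment> \<open>(i)\<close>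
  "(x0 \<noteq> y0 \<and> x0 \<noteq> - y0 \<longrightarrow>
      (\<exists>!t. t \<in> {-1<..<1} \<and> gfun \<alpha> \<beta> x0 y0 \<gamma>0 t = 0) \<and>
      (\<forall>t \<in> {-1<..<1}. gfun \<alpha> \<beta> x0 y0 \<gamma>0 t = 0 \<longrightarrow>
         proj \<beta> (Calpha \<alpha>) (x0, y0, \<gamma>0) =
           {((1 / (1 - t^2)) *\<^sub>R (x0 - t *\<^sub>R y0), (1 / (1 - t^2)) *\<^sub>R (y0 - t *\<^sub>R x0),
             \<gamma>0 + t * \<alpha> / \<beta>^2)}))
   \<and>
  \<comment> \<open>(ii)\<close>
   (y0 = - x0 \<and> x0 \<noteq> 0 \<longrightarrow>
      (\<alpha> * (\<gamma>0 - \<alpha> / \<beta>^2) < - (norm x0 ^ 2 / 4) \<longrightarrow>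
         (\<exists>!t. t \<in> {-1<..<1} \<and> g1fun \<alpha> \<beta> x0 \<gamma>0 t = 0) \<and>
         (\<forall>t \<in> {-1<..<1}. g1fun \<alpha> \<beta> x0 \<gamma>0 t = 0 \<longrightarrow>
            proj \<beta> (Calpha \<alpha>) (x0, - x0, \<gamma>0) =
              {((1 / (1 - t)) *\<^sub>R x0, (1 / (1 - t)) *\<^sub>R (- x0), \<gamma>0 + t * \<alpha> / \<beta>^2)})) \<and>
      (\<alpha> * (\<gamma>0 - \<alpha> / \<beta>^2) \<ge> - (norm x0 ^ 2 / 4) \<longrightarrow>
         proj \<beta> (Calpha \<alpha>) (x0, - x0, \<gamma>0) =
           {((1/2) *\<^sub>R x0 + (1 / sqrt 2) *\<^sub>R u, - ((1/2) *\<^sub>R x0) + (1 / sqrt 2) *\<^sub>R u, \<gamma>0 - \<alpha> / \<beta>^2)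
             | u. norm u = sqrt (2 * \<alpha> * (\<gamma>0 - \<alpha> / \<beta>^2) + norm x0 ^ 2 / 2)} \<and>
         ((\<exists>w. proj \<beta> (Calpha \<alpha>) (x0, - x0, \<gamma>0) = {w}) \<longleftrightarrow>
            \<alpha> * (\<gamma>0 - \<alpha> / \<beta>^2) = - (norm x0 ^ 2 / 4))))
   \<and>
  \<comment> \<open>(iii)\<close>
   (y0 = x0 \<and> x0 \<noteq> 0 \<longrightarrow>
      (\<alpha> * (\<gamma>0 + \<alpha> / \<beta>^2) > norm x0 ^ 2 / 4 \<longrightarrow>
         (\<exists>!t. t \<in> {-1<..<1} \<and> g2fun \<alpha> \<beta> x0 \<gamma>0 t = 0) \<and>
         (\<forall>t \<in> {-1<..<1}. g2fun \<alpha> \<beta> x0 \<gamma>0 t = 0 \<longrightarrow>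
            proj \<beta> (Calpha \<alpha>) (x0, x0, \<gamma>0) =
              {((1 / (1 + t)) *\<^sub>R x0, (1 / (1 + t)) *\<^sub>R x0, \<gamma>0 + t * \<alpha> / \<beta>^2)})) \<and>
      (\<alpha> * (\<gamma>0 + \<alpha> / \<beta>^2) \<le> norm x0 ^ 2 / 4 \<longrightarrow>
         proj \<beta> (Calpha \<alpha>) (x0, x0, \<gamma>0) =
           {((1/2) *\<^sub>R x0 - (1 / sqrt 2) *\<^sub>R v, (1/2) *\<^sub>R x0 + (1 / sqrt 2) *\<^sub>R v, \<gamma>0 + \<alpha> / \<beta>^2)
             | v. norm v = sqrt (- 2 * \<alpha> * (\<gamma>0 + \<alpha> / \<beta>^2) + norm x0 ^ 2 / 2)} \<and>
         ((\<exists>w. proj \<beta> (Calpha \<alpha>) (x0, x0, \<gamma>0) = {w}) \<longleftrightarrow>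
            \<alpha> * (\<gamma>0 + \<alpha> / \<beta>^2) = norm x0 ^ 2 / 4)))
   \<and>
  \<comment> \<open>(iv)\<close>
   (x0 = 0 \<and> y0 = 0 \<longrightarrow>
      (\<alpha> * \<gamma>0 > \<alpha>^2 / \<beta>^2 \<longrightarrow>
         proj \<beta> (Calpha \<alpha>) ((0::'a), (0::'a), \<gamma>0) =
           {((1 / sqrt 2) *\<^sub>R u, (1 / sqrt 2) *\<^sub>R u, \<gamma>0 - \<alpha> / \<beta>^2)
             | u. norm u = sqrt (2 * \<alpha> * (\<gamma>0 - \<alpha> / \<beta>^2))} \<and>
         \<not> (\<exists>w. proj \<beta> (Calpha \<alpha>) ((0::'a), (0::'a), \<gamma>0) = {w})) \<and>
      (\<bar>\<alpha> * \<gamma>0\<bar> \<le> \<alpha>^2 / \<beta>^2 \<longrightarrow>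
         proj \<beta> (Calpha \<alpha>) ((0::'a), (0::'a), \<gamma>0) = {((0::'a), (0::'a), 0)}) \<and>
      (\<alpha> * \<gamma>0 < - (\<alpha>^2 / \<beta>^2) \<longrightarrow>
         proj \<beta> (Calpha \<alpha>) ((0::'a), (0::'a), \<gamma>0) =
           {(- ((1 / sqrt 2) *\<^sub>R v), (1 / sqrt 2) *\<^sub>R v, \<gamma>0 + \<alpha> / \<beta>^2)
             | v. norm v = sqrt (- 2 * \<alpha> * (\<gamma>0 + \<alpha> / \<beta>^2))} \<and>
         \<not> (\<exists>w. proj \<beta> (Calpha \<alpha>) ((0::'a), (0::'a), \<gamma>0) = {w})))"
proof -
  have \<beta>: "\<beta> \<noteq> 0"
    using beta by simp
  show ?thesis (is "?i \<and> ?ii \<and> ?iii \<and> ?iv")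
  proof (intro conjI)
    show ?i
      by (intro impI proj_Calpha_at_unique_gfun_root[OF alpha \<beta>] gfun_root_exists) auto
    show ?ii
      by (intro impI conjI; elim conjE; rule proj_Calpha_antipodal_interior[OF alpha \<beta>]
          proj_Calpha_antipodal_boundary[OF nontriv \<beta>]; assumption)
    show ?iii
      by (intro impI conjI; elim conjE; rule proj_Calpha_diagonal_interior[OF alpha \<beta>]
          proj_Calpha_diagonal_boundary[OF nontriv \<beta>]; assumption)
    show ?iv
      by (intro impI conjI; elim conjE; rule proj_Calpha_origin_antipodal[OF nontriv \<beta>]
          proj_Calpha_origin[OF alpha \<beta>] proj_Calpha_origin_diagonal[OF nontriv \<beta>]; assumption)
  qed
qed

end
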